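(* Every closure semilattice can be embedded into some closure space. That is, if $\mathbf S=(S,\vee_{\mathbf S},K_{\mathbf S})$ is a closure semilattice, then there exist a set $X$, a closure operation $K$ on $\mathcal P(X)$ and an injective map $\varphi:S\to\mathcal P(X)$ such that $\varphi(a\vee_{\mathbf S}b)=\varphi(a)\cup\varphi(b)$ and $\varphi(K_{\mathbf S}a)=K\varphi(a)$ for all $a,b\in S$.
   Context: A closure operation on a poset is a unary operation $K$ which is extensive ($x\le Kx$), idempotent ($KKx=Kx$) and isotone ($x\le y\Rightarrow Kx\le Ky$). A closure semilattice is a join semilattice endowed with a closure operation (with respect to the order induced by the join). A closure space is a set $X$ with a closure operation $K$ on $(\mathcal P(X),\subseteq)$, regarded as the structure $(\mathcal P(X),\cup,K)$. *)

theory Defs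
  imports Main
begin

definition join_semilattice :: "'a set \<Rightarrow> ('a \<Rightarrow> 'a \<Rightarrow> 'a) \<Rightarrow> bool" where
  "join_semilattice S j \<longleftrightarrow>
     (\<forall>a\<in>S. \<forall>b\<in>S. j a b \<in> S) \<and>
     (\<forall>a\<in>S. j a a = a) \<and>
     (\<forall>a\<in>S. \<forall>b\<in>S. j a b = j b a) \<and>
     (\<forall>a\<in>S. \<forall>b\<in>S. \<forall>c\<in>S. j (j a b) c = j a (j b c))"

definition sl_le :: "('a \<Rightarrow> 'a \<Rightarrow> 'a) \<Rightarrow> 'a \<Rightarrow> 'a \<Rightarrow> bool" where
  "sl_le j a b \<longleftrightarrow> j a b = b"

definition closure_op :: "'a set \<Rightarrow> ('a \<Rightarrow> 'a \<Rightarrow> bool) \<Rightarrow> ('a \<Rightarrow> 'a) \<Rightarrow> bool" where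
  "closure_op P le K \<longleftrightarrow>
     (\<forall>x\<in>P. K x \<in> P) \<and>
     (\<forall>x\<in>P. le x (K x)) \<and>
     (\<forall>x\<in>P. K (K x) = K x) \<and>
     (\<forall>x\<in>P. \<forall>y\<in>P. le x y \<longrightarrow> le (K x) (K y))"

definition closure_semilattice :: "'a set \<Rightarrow> ('a \<Rightarrow> 'a \<Rightarrow> 'a) \<Rightarrow> ('a \<Rightarrow> 'a) \<Rightarrow> bool" where
  "closure_semilattice S j K \<longleftrightarrow> join_semilattice S j \<and> closure_op S (sl_le j) K"

definition closure_space :: "'b set \<Rightarrow> ('b set \<Rightarrow> 'b set) \<Rightarrow> bool" where
  "closure_space X K \<longleftrightarrow> closure_op (Pow X) (\<subseteq>) K"

end

theory Submission
  imports Defs "HOL.Hull"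
begin

text \<open>Represent each a by the complement of its principal filter, \<open>\<phi> a = {x \<in> S. \<not> a \<le> x}\<close>.
  This is an order embedding, and it turns joins into unions because \<open>a \<squnion> b \<le> x\<close> iff
  \<open>a \<le> x\<close> and \<open>b \<le> x\<close>. The closed sets are S together with the images of the closed
  elements; since \<open>KS a\<close> is the least closed element above a, the generated Moore closure maps
  \<open>\<phi> a\<close> to \<open>\<phi> (KS a)\<close>.\<close>

lemma closure_space_hull:
  assumes "P X"
  shows "closure_space X ((hull) P)"
  unfolding closure_space_def closure_op_def
  using assms by (simp add: hull_minimal hull_mono hull_subset)

definition compl_principal_filter :: "'a set \<Rightarrow> ('a \<Rightarrow> 'a \<Rightarrow> 'a) \<Rightarrow> 'a \<Rightarrow> 'a set" where
  "compl_principal_filter S j a = {x \<in> S. \<not> sl_le j a x}"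

context
  fixes S :: "'a set" and j :: "'a \<Rightarrow> 'a \<Rightarrow> 'a"
  assumes js: "join_semilattice S j"
begin

lemma sl_le_refl: "a \<in> S \<Longrightarrow> sl_le j a a"
  using js unfolding join_semilattice_def sl_le_def by blast

lemma sl_le_trans: "\<lbrakk>a \<in> S; b \<in> S; c \<in> S; sl_le j a b; sl_le j b c\<rbrakk> \<Longrightarrow> sl_le j a c"
  using js unfolding join_semilattice_def sl_le_def by metis

lemma sl_le_antisym: "\<lbrakk>a \<in> S; b \<in> S; sl_le j a b; sl_le j b a\<rbrakk> \<Longrightarrow> a = b"
  using js unfolding join_semilattice_def sl_le_def by metis

lemma sl_le_join_iff:
  assumes "a \<in> S" "b \<in> S" "x \<in> S"
  shows "sl_le j (j a b) x \<longleftrightarrow> sl_le j a x \<and> sl_le j b x"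
proof
  have ab: "j a b \<in> S" using js assms unfolding join_semilattice_def by blast
  have "sl_le j a (j a b)" "sl_le j b (j a b)"
    using js assms unfolding join_semilattice_def sl_le_def by metis+
  then show "sl_le j (j a b) x \<Longrightarrow> sl_le j a x \<and> sl_le j b x"
    using sl_le_trans assms ab by blast
next
  show "sl_le j a x \<and> sl_le j b x \<Longrightarrow> sl_le j (j a b) x"
    using js assms unfolding join_semilattice_def sl_le_def by metis
qed

lemma compl_principal_filter_subset_iff:
  assumes "a \<in> S" "c \<in> S"
  shows "compl_principal_filter S j a \<subseteq> compl_principal_filter S j c \<longleftrightarrow> sl_le j a c"
  using assms sl_le_refl sl_le_trans
  unfolding compl_principal_filter_def by blast

lemma inj_on_compl_principal_filter: "inj_on (compl_principal_filter S j) S"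
  by (rule inj_onI)
     (metis compl_principal_filter_subset_iff sl_le_antisym order_refl)

lemma compl_principal_filter_join:
  assumes "a \<in> S" "b \<in> S"
  shows "compl_principal_filter S j (j a b) =
           compl_principal_filter S j a \<union> compl_principal_filter S j b"
  using sl_le_join_iff[OF assms] unfolding compl_principal_filter_def by auto

end

text \<open>S itself is included so that the hull of a subset of S stays inside S.\<close>

definition represented_closed :: "'a set \<Rightarrow> ('a \<Rightarrow> 'a \<Rightarrow> 'a) \<Rightarrow> ('a \<Rightarrow> 'a) \<Rightarrow> 'a set \<Rightarrow> bool" where
  "represented_closed S j KS C \<longleftrightarrow>
     C = S \<or> (\<exists>c \<in> S. KS c = c \<and> C = compl_principal_filter S j c)"

lemma compl_principal_filter_closure:
  assumes cs: "closure_semilattice S j KS" and a: "a \<in> S"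
  shows "compl_principal_filter S j (KS a) =
           represented_closed S j KS hull compl_principal_filter S j a"
proof -
  let ?\<phi> = "compl_principal_filter S j"
  have js: "join_semilattice S j"
    and KS_in: "KS a \<in> S" and KS_ext: "sl_le j a (KS a)" and KS_idem: "KS (KS a) = KS a"
    and KS_mono: "\<And>c. c \<in> S \<Longrightarrow> sl_le j a c \<Longrightarrow> sl_le j (KS a) (KS c)"
    using cs a unfolding closure_semilattice_def closure_op_def by auto
  show ?thesis
  proof (rule hull_unique[symmetric])
    show "?\<phi> a \<subseteq> ?\<phi> (KS a)"
      using compl_principal_filter_subset_iff[OF js a KS_in] KS_ext by blast
    show "represented_closed S j KS (?\<phi> (KS a))"
      unfolding represented_closed_def using KS_in KS_idem by blast
  next
    fix C assume sub: "?\<phi> a \<subseteq> C" and closed: "represented_closed S j KS C"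
    show "?\<phi> (KS a) \<subseteq> C"
    proof (cases "C = S")
      case True
      then show ?thesis unfolding compl_principal_filter_def by blast
    next
      case False
      then obtain c where c: "c \<in> S" "KS c = c" and C: "C = ?\<phi> c"
        using closed unfolding represented_closed_def by blast
      have "sl_le j a c"
        using sub C compl_principal_filter_subset_iff[OF js a c(1)] by blast
      then have "sl_le j (KS a) c"
        using KS_mono c by metis
      then show ?thesis
        using C compl_principal_filter_subset_iff[OF js KS_in c(1)] by blast
    qed
  qed
qed

theorem theorem5p1:
  fixes S :: "'a set" and j :: "'a \<Rightarrow> 'a \<Rightarrow> 'a" and KS :: "'a \<Rightarrow> 'a"
  assumes "closure_semilattice S j KS"
  shows "\<exists>(X :: 'a set) (K :: 'a set \<Rightarrow> 'a set) (\<phi> :: 'a \<Rightarrow> 'a set).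
           closure_space X K \<and> inj_on \<phi> S \<and> (\<forall>a\<in>S. \<phi> a \<subseteq> X) \<and>
           (\<forall>a\<in>S. \<forall>b\<in>S. \<phi> (j a b) = \<phi> a \<union> \<phi> b) \<and>
           (\<forall>a\<in>S. \<phi> (KS a) = K (\<phi> a))"
proof -
  have js: "join_semilattice S j"
    using assms unfolding closure_semilattice_def by blast
  have "closure_space S ((hull) (represented_closed S j KS))"
    by (rule closure_space_hull) (simp add: represented_closed_def)
  moreover have "\<forall>a\<in>S. compl_principal_filter S j a \<subseteq> S"
    unfolding compl_principal_filter_def by blast
  ultimately show ?thesis
    using inj_on_compl_principal_filter[OF js] compl_principal_filter_join[OF js]
      compl_principal_filter_closure[OF assms]
    by blast
qed

end
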